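(* Let $k\ge 2$ and let $n_1,\dots,n_k\ge 3$ be integers. For $G=P_{n_1}\Box P_{n_2}\Box\cdots\Box P_{n_k}$, $$rx_3(G)=\sum_{i=1}^k n_i-k.$$
   Context: $P_n$ denotes the path on $n$ vertices. An edge coloring may give adjacent edges the same color; a tree is rainbow if its edges have pairwise distinct colors. For a connected graph $G$ on at least $3$ vertices, $rx_3(G)$ is the minimum number of colors in an edge coloring such that every set of $3$ vertices lies in some rainbow tree. The Cartesian product $G\Box H$ has vertex set $V(G)\times V(H)$, with $(g_1,h_1)\sim(g_2,h_2)$ iff ($g_1=g_2$ and $h_1h_2\in E(H)$) or ($h_1=h_2$ and $g_1g_2\in E(G)$). *)

theory Defs
  imports Main
begin

text \<open>A (simple, undirected) graph is a pair (V, E) of a vertex set and a set of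
  edges, each edge being a 2-element subset of V.\<close>

type_synonym 'a graph = "'a set \<times> 'a set set"

definition path_graph :: "nat \<Rightarrow> nat graph" where
  "path_graph n = ({0..<n}, {{i, Suc i} | i. Suc i < n})"

definition cart_prod :: "'a graph list \<Rightarrow> 'a list graph" where
  "cart_prod Gs =
    ({xs. length xs = length Gs \<and> (\<forall>i<length Gs. xs ! i \<in> fst (Gs ! i))},
     {{xs, ys} | xs ys.
        length xs = length Gs \<and> (\<forall>i<length Gs. xs ! i \<in> fst (Gs ! i)) \<and>
        length ys = length Gs \<and> (\<forall>i<length Gs. ys ! i \<in> fst (Gs ! i)) \<and>
        (\<exists>i<length Gs. {xs ! i, ys ! i} \<in> snd (Gs ! i) \<and>
            (\<forall>j<length Gs. j \<noteq> i \<longrightarrow> xs ! j = ys ! j))})"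

definition adj_in :: "'a set set \<Rightarrow> 'a \<Rightarrow> 'a \<Rightarrow> bool" where
  "adj_in T u v \<longleftrightarrow> {u, v} \<in> T \<and> u \<noteq> v"

definition is_tree :: "'a set set \<Rightarrow> bool" where
  "is_tree T \<longleftrightarrow> finite T \<and> T \<noteq> {} \<and> (\<forall>e\<in>T. card e = 2) \<and>
     (\<forall>u\<in>\<Union>T. \<forall>v\<in>\<Union>T. (adj_in T)\<^sup>*\<^sup>* u v) \<and>
     card T + 1 = card (\<Union>T)"

definition three_rainbow_colouring :: "'a graph \<Rightarrow> nat \<Rightarrow> ('a set \<Rightarrow> nat) \<Rightarrow> bool" where
  "three_rainbow_colouring G m c \<longleftrightarrow>
     (\<forall>e\<in>snd G. c e < m) \<and>
     (\<forall>S\<subseteq>fst G. card S = 3 \<longrightarrow>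
        (\<exists>T\<subseteq>snd G. is_tree T \<and> S \<subseteq> \<Union>T \<and> inj_on c T))"

definition rx3 :: "'a graph \<Rightarrow> nat" where
  "rx3 G = (LEAST m. \<exists>c. three_rainbow_colouring G m c)"

end

theory Submission
  imports Defs
begin

text \<open>An edge of the grid moves one coordinate \<open>i\<close> between \<open>j\<close> and \<open>j+1\<close>; call \<open>(i,j)\<close>
  its layer. There are \<open>\<Sum>(n\<^sub>i - 1)\<close> layers.

  Lower bound: a tree through the origin, the vertex \<open>(n\<^sub>1-1,0,...,0)\<close> and the vertex
  \<open>(0,n\<^sub>2-1,...,n\<^sub>k-1)\<close> must cross every layer, and the crossing edges are rainbow.

  Upper bound: colour each edge by its layer. Given three vertices, join their coordinatewise
  median to each of them by a staircase path. In every coordinate the median lies between any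
  two of the three values, so the three paths use pairwise distinct layers and any spanning
  tree of their union is rainbow.\<close>

lemma adj_in_sym: "adj_in T x y \<Longrightarrow> adj_in T y x"
  by (auto simp: adj_in_def insert_commute)

lemma rtranclp_adj_in_sym: "(adj_in T)\<^sup>*\<^sup>* x y \<Longrightarrow> (adj_in T)\<^sup>*\<^sup>* y x"
  by (induction rule: rtranclp_induct)
    (auto intro: converse_rtranclp_into_rtranclp adj_in_sym)

lemma rtranclp_adj_in_mono:
  "T \<subseteq> T' \<Longrightarrow> (adj_in T)\<^sup>*\<^sup>* x y \<Longrightarrow> (adj_in T')\<^sup>*\<^sup>* x y"
  by (erule rtranclp_mono[THEN predicate2D, rotated]) (auto simp: adj_in_def)

lemma rtranclp_adj_in_endpoints:
  "(adj_in T)\<^sup>*\<^sup>* x y \<Longrightarrow> x \<noteq> y \<Longrightarrow> x \<in> \<Union>T \<and> y \<in> \<Union>T"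
  by (induction rule: rtranclp_induct) (auto simp: adj_in_def)

lemma rtranclp_crossing:
  "r\<^sup>*\<^sup>* a b \<Longrightarrow> P a \<Longrightarrow> \<not> P b \<Longrightarrow> \<exists>x y. r x y \<and> P x \<and> \<not> P y"
  by (induction rule: rtranclp_induct) auto

text \<open>Unlike \<open>is_tree\<close>, this notion also covers the one-vertex tree with no edges,
  from which spanning trees are grown leaf by leaf.\<close>
definition tree_on :: "'a set \<Rightarrow> 'a set set \<Rightarrow> bool" where
  "tree_on V T \<longleftrightarrow> finite V \<and> (\<forall>e\<in>T. card e = 2 \<and> e \<subseteq> V) \<and>
     (\<forall>x\<in>V. \<forall>y\<in>V. (adj_in T)\<^sup>*\<^sup>* x y) \<and> card T + 1 = card V"

lemma tree_on_singleton: "tree_on {r} {}"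
  by (auto simp: tree_on_def)

lemma tree_on_insert_leaf:
  assumes T: "tree_on V T" and u: "u \<in> V" and v: "v \<notin> V"
  shows "tree_on (insert v V) (insert {u,v} T)"
proof -
  let ?T = "insert {u,v} T"
  have "finite T" using T finite_subset[of T "Pow V"] by (auto simp: tree_on_def)
  moreover have "{u,v} \<notin> T" using T v by (auto simp: tree_on_def)
  ultimately have card: "card ?T + 1 = card (insert v V)"
    using T v by (simp add: tree_on_def)
  have old: "(adj_in ?T)\<^sup>*\<^sup>* x y" if "x \<in> V" "y \<in> V" for x y
    using T that by (intro rtranclp_adj_in_mono[of T ?T]) (auto simp: tree_on_def)
  have new: "(adj_in ?T)\<^sup>*\<^sup>* x v" if "x \<in> V" for x
  proof -
    have "adj_in ?T u v" using u v by (auto simp: adj_in_def)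
    with old[OF that u] show ?thesis by (rule rtranclp.rtrancl_into_rtrancl)
  qed
  have conn: "\<forall>x\<in>insert v V. \<forall>y\<in>insert v V. (adj_in ?T)\<^sup>*\<^sup>* x y"
    using old new rtranclp_adj_in_sym[OF new] by auto
  have "u \<noteq> v" using u v by auto
  then have "\<forall>e\<in>?T. card e = 2 \<and> e \<subseteq> insert v V" using T u by (auto simp: tree_on_def)
  then show ?thesis using T card conn by (simp add: tree_on_def)
qed

lemma tree_on_is_tree:
  assumes T: "tree_on V T" and "T \<noteq> {}"
  shows "is_tree T \<and> \<Union>T = V"
proof -
  have "V \<subseteq> \<Union>T"
  proof
    fix x assume x: "x \<in> V"
    from \<open>T \<noteq> {}\<close> obtain e where e: "e \<in> T" by auto
    with T obtain a b where ab: "e = {a,b}" "a \<noteq> b" "a \<in> V"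
      by (auto simp: tree_on_def card_2_iff)
    then have "(adj_in T)\<^sup>*\<^sup>* x a" using T x by (auto simp: tree_on_def)
    then show "x \<in> \<Union>T" using rtranclp_adj_in_endpoints[of T x a] e ab by (cases "x = a") auto
  qed
  then have "\<Union>T = V" using T by (auto simp: tree_on_def)
  moreover have "finite T" using T finite_subset[of T "Pow V"] by (auto simp: tree_on_def)
  ultimately show ?thesis using T assms by (auto simp: is_tree_def tree_on_def)
qed

lemma tree_on_extend_to_spanning:
  assumes finU: "finite (\<Union>H)" and conn: "\<forall>x\<in>\<Union>H. \<forall>y\<in>\<Union>H. (adj_in H)\<^sup>*\<^sup>* x y"
    and "tree_on V T" "T \<subseteq> H" "V \<subseteq> \<Union>H"
  shows "\<exists>T'\<subseteq>H. tree_on (\<Union>H) T'"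
  using assms(3-)
proof (induction "card (\<Union>H - V)" arbitrary: V T)
  case 0
  then have "V = \<Union>H" using finU by auto
  then show ?case using 0 by auto
next
  case (Suc n)
  then have "\<Union>H - V \<noteq> {}" by (metis card.empty nat.distinct(1))
  then obtain z where z: "z \<in> \<Union>H" "z \<notin> V" by blast
  have "card T + 1 = card V" using Suc.prems(1) unfolding tree_on_def by blast
  then obtain a where a: "a \<in> V" by (metis add_is_0 card.empty ex_in_conv one_neq_zero)
  then have "(adj_in H)\<^sup>*\<^sup>* a z" using conn Suc.prems(3) z by blast
  then obtain x y where xy: "adj_in H x y" "x \<in> V" "y \<notin> V"
    using rtranclp_crossing[of "adj_in H" a z "\<lambda>x. x \<in> V"] a z by blast
  then have y: "y \<in> \<Union>H" "{x,y} \<in> H" by (auto simp: adj_in_def)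
  have "\<Union>H - insert y V = (\<Union>H - V) - {y}" by auto
  then have "n = card (\<Union>H - insert y V)"
    using Suc.hyps(2) finU y xy by (simp add: card_Diff_singleton)
  then show ?case
    using Suc.hyps(1)[OF _ tree_on_insert_leaf[OF Suc.prems(1) xy(2,3)]] Suc.prems(2,3) y by blast
qed

lemma spanning_tree_exists:
  assumes fin: "finite H" and H: "H \<noteq> {}" and edges: "\<forall>e\<in>H. card e = 2"
    and conn: "\<forall>x\<in>\<Union>H. \<forall>y\<in>\<Union>H. (adj_in H)\<^sup>*\<^sup>* x y"
  shows "\<exists>T\<subseteq>H. is_tree T \<and> \<Union>T = \<Union>H"
proof -
  have finU: "finite (\<Union>H)"
    using fin edges by (intro finite_Union) (auto intro: card_ge_0_finite)
  obtain e where e: "e \<in> H" using H by auto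
  with edges obtain r r' where "e = {r,r'}" "r \<noteq> r'" by (meson card_2_iff)
  with e have r: "r \<in> \<Union>H" "r' \<in> \<Union>H" "r \<noteq> r'" by blast+
  obtain T where T: "T \<subseteq> H" "tree_on (\<Union>H) T"
    using tree_on_extend_to_spanning[OF finU conn tree_on_singleton[of r]] r by blast
  have "card {r,r'} \<le> card (\<Union>H)"
    using r by (intro card_mono[OF finU]) auto
  moreover have "card T + 1 = card (\<Union>H)" using T(2) unfolding tree_on_def by blast
  ultimately have "T \<noteq> {}" using r(3) by auto
  then show ?thesis using T(1) tree_on_is_tree[OF T(2)] by blast
qed

definition grid_vertex :: "nat list \<Rightarrow> nat list \<Rightarrow> bool" where
  "grid_vertex ns x \<longleftrightarrow> length x = length ns \<and> (\<forall>i<length ns. x!i < ns!i)"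

definition grid_adj :: "nat list \<Rightarrow> nat list \<Rightarrow> nat list \<Rightarrow> bool" where
  "grid_adj ns x y \<longleftrightarrow> grid_vertex ns x \<and> grid_vertex ns y \<and>
     (\<exists>i<length ns. (y!i = Suc (x!i) \<or> x!i = Suc (y!i)) \<and>
        (\<forall>j<length ns. j \<noteq> i \<longrightarrow> x!j = y!j))"

lemma grid_vertices_eq: "fst (cart_prod (map path_graph ns)) = {x. grid_vertex ns x}"
  by (auto simp: cart_prod_def path_graph_def grid_vertex_def)

lemma path_graph_edge_iff:
  "p < n \<Longrightarrow> q < n \<Longrightarrow> {p,q} \<in> snd (path_graph n) \<longleftrightarrow> q = Suc p \<or> p = Suc q"
  by (auto simp: path_graph_def doubleton_eq_iff)

lemma grid_edges_eq:
  "snd (cart_prod (map path_graph ns)) = {{x,y} | x y. grid_adj ns x y}"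
proof -
  have vertex: "(length x = length ns \<and> (\<forall>i<length ns. x!i \<in> fst (map path_graph ns ! i)))
      \<longleftrightarrow> grid_vertex ns x" for x
    by (simp add: grid_vertex_def path_graph_def)
  have step: "{x!i, y!i} \<in> snd (map path_graph ns ! i) \<longleftrightarrow> y!i = Suc (x!i) \<or> x!i = Suc (y!i)"
    if "grid_vertex ns x" "grid_vertex ns y" "i < length ns" for x y i
    using that path_graph_edge_iff[of "x!i" "ns!i" "y!i"] by (simp add: grid_vertex_def)
  have adj: "(length x = length ns \<and> (\<forall>i<length ns. x!i \<in> fst (map path_graph ns ! i)) \<and>
        length y = length ns \<and> (\<forall>i<length ns. y!i \<in> fst (map path_graph ns ! i)) \<and>
        (\<exists>i<length ns. {x!i, y!i} \<in> snd (map path_graph ns ! i) \<and>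
            (\<forall>j<length ns. j \<noteq> i \<longrightarrow> x!j = y!j))) \<longleftrightarrow> grid_adj ns x y" for x y
    unfolding grid_adj_def using vertex[of x] vertex[of y] step[of x y] by blast
  show ?thesis
    unfolding cart_prod_def snd_conv length_map by (simp only: adj)
qed

lemma grid_adj_sym: "grid_adj ns x y \<Longrightarrow> grid_adj ns y x"
  unfolding grid_adj_def by (metis (no_types, lifting))

lemma grid_edge_imp_adj:
  "{x,y} \<in> snd (cart_prod (map path_graph ns)) \<Longrightarrow> grid_adj ns x y"
  unfolding grid_edges_eq by (auto simp: doubleton_eq_iff dest: grid_adj_sym)

lemma grid_adj_neq: "grid_adj ns x y \<Longrightarrow> x \<noteq> y"
  unfolding grid_adj_def by auto

lemma card_grid_edge: "e \<in> snd (cart_prod (map path_graph ns)) \<Longrightarrow> card e = 2"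
  unfolding grid_edges_eq by (auto dest: grid_adj_neq)

definition layer :: "nat list set \<Rightarrow> nat \<times> nat" where
  "layer e = (let i = LEAST i. \<exists>x\<in>e. \<exists>y\<in>e. x!i \<noteq> y!i in (i, Min ((\<lambda>x. x!i) ` e)))"

definition grid_layers :: "nat list \<Rightarrow> (nat \<times> nat) set" where
  "grid_layers ns = (SIGMA i:{..<length ns}. {..<ns!i - 1})"

lemma layer_doubleton:
  assumes "i < length x" "x!i \<noteq> y!i" "\<forall>j<length x. j \<noteq> i \<longrightarrow> x!j = y!j"
  shows "layer {x,y} = (i, min (x!i) (y!i))"
proof -
  have "(LEAST i. \<exists>a\<in>{x,y}. \<exists>b\<in>{x,y}. a!i \<noteq> b!i) = i"
  proof (rule Least_equality)
    fix l assume "\<exists>a\<in>{x,y}. \<exists>b\<in>{x,y}. a!l \<noteq> b!l"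
    then have "x!l \<noteq> y!l" by auto
    show "i \<le> l"
    proof (rule ccontr)
      assume "\<not> i \<le> l"
      with assms(1) have "l < length x" "l \<noteq> i" by auto
      with assms(3) \<open>x!l \<noteq> y!l\<close> show False by blast
    qed
  qed (use assms in auto)
  then show ?thesis by (simp add: layer_def)
qed

lemma grid_adj_layer:
  assumes "grid_adj ns x y"
  obtains i where "i < length ns" "y!i = Suc (x!i) \<or> x!i = Suc (y!i)"
    "\<forall>j<length ns. j \<noteq> i \<longrightarrow> x!j = y!j" "layer {x,y} = (i, min (x!i) (y!i))"
    "max (x!i) (y!i) < ns!i"
proof -
  obtain i where i: "i < length ns" "y!i = Suc (x!i) \<or> x!i = Suc (y!i)"
    "\<forall>j<length ns. j \<noteq> i \<longrightarrow> x!j = y!j"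
    using assms unfolding grid_adj_def by blast
  moreover have "length x = length ns" "x!i < ns!i" "y!i < ns!i"
    using assms i(1) unfolding grid_adj_def grid_vertex_def by auto
  ultimately show ?thesis using that layer_doubleton[of i x y] by auto
qed

lemma layer_grid_edge:
  "e \<in> snd (cart_prod (map path_graph ns)) \<Longrightarrow> layer e \<in> grid_layers ns"
  unfolding grid_edges_eq grid_layers_def
  by (elim CollectE exE conjE grid_adj_layer) auto

lemma card_grid_layers: "card (grid_layers ns) = (\<Sum>n\<leftarrow>ns. n - 1)"
  by (simp add: grid_layers_def sum_list_sum_nth atLeast0LessThan)

lemma grid_walk_crosses_layer:
  assumes T: "T \<subseteq> snd (cart_prod (map path_graph ns))"
    and walk: "(adj_in T)\<^sup>*\<^sup>* a b" and i: "i < length ns" and "a!i \<le> j" "j < b!i"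
  shows "(i,j) \<in> layer ` T"
proof -
  obtain x y where xy: "adj_in T x y" "x!i \<le> j" "j < y!i"
    using rtranclp_crossing[OF walk, of "\<lambda>x. x!i \<le> j"] assms(4,5) by auto
  then have e: "{x,y} \<in> T" by (simp add: adj_in_def)
  with T have "grid_adj ns x y" by (auto intro: grid_edge_imp_adj)
  then obtain i' where i': "i' < length ns" "y!i' = Suc (x!i') \<or> x!i' = Suc (y!i')"
    "\<forall>j<length ns. j \<noteq> i' \<longrightarrow> x!j = y!j" "layer {x,y} = (i', min (x!i') (y!i'))"
    by (rule grid_adj_layer)
  have "i' = i" using i'(3) i xy(2,3) by fastforce
  with i'(2) xy(2,3) have "x!i = j" "y!i = Suc j" by auto
  with e i'(4) \<open>i' = i\<close> show ?thesis by force
qed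

lemma grid_layers_subset_layer_image:
  assumes T: "T \<subseteq> snd (cart_prod (map path_graph ns))"
    and conn: "\<forall>x\<in>\<Union>T. \<forall>y\<in>\<Union>T. (adj_in T)\<^sup>*\<^sup>* x y"
    and extremes: "\<forall>i<length ns. \<exists>a\<in>\<Union>T. \<exists>b\<in>\<Union>T. a!i = 0 \<and> b!i = ns!i - 1"
  shows "grid_layers ns \<subseteq> layer ` T"
proof
  fix p assume "p \<in> grid_layers ns"
  then obtain i j where p: "p = (i,j)" and i: "i < length ns" and j: "j < ns!i - 1"
    by (auto simp: grid_layers_def)
  from extremes i obtain a b where "a \<in> \<Union>T" "b \<in> \<Union>T" "a!i = 0" "b!i = ns!i - 1"
    by blast
  with conn have "(adj_in T)\<^sup>*\<^sup>* a b" "a!i \<le> j" "j < b!i" using j by auto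
  then show "p \<in> layer ` T" unfolding p by (rule grid_walk_crosses_layer[OF T _ i])
qed

lemma card_rainbow_le:
  assumes "three_rainbow_colouring G m c" "T \<subseteq> snd G" "finite T" "inj_on c T"
  shows "card T \<le> m"
proof -
  have "card T = card (c ` T)" using assms(4) by (simp add: card_image)
  also have "\<dots> \<le> card {..<m}"
    using assms(1,2) by (intro card_mono) (auto simp: three_rainbow_colouring_def)
  finally show ?thesis by simp
qed

lemma rx3_lower_bound:
  assumes k: "2 \<le> length ns" and n: "\<forall>i<length ns. 2 \<le> ns!i"
    and col: "three_rainbow_colouring (cart_prod (map path_graph ns)) m c"
  shows "card (grid_layers ns) \<le> m"
proof -
  let ?G = "cart_prod (map path_graph ns)"
  let ?k = "length ns"
  define u where "u = replicate ?k (0::nat)"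
  define v where "v = u[0 := ns!0 - 1]"
  define w where "w = (map (\<lambda>n. n - 1) ns)[0 := 0]"
  have u_nth: "u!i = 0" and v_nth: "v!i = (if i = 0 then ns!0 - 1 else 0)"
    and w_nth: "w!i = (if i = 0 then 0 else ns!i - 1)" if "i < ?k" for i
    using that by (auto simp: u_def v_def w_def nth_list_update)
  have vertex: "grid_vertex ns x" if "length x = ?k" "\<forall>i<?k. x!i \<le> ns!i - 1" for x
    using that n by (fastforce simp: grid_vertex_def)
  have "{u,v,w} \<subseteq> fst ?G"
    unfolding grid_vertices_eq using vertex u_nth v_nth w_nth
    by (simp add: u_def v_def w_def)
  moreover have "card {u,v,w} = 3"
  proof -
    have "0 < ?k" "1 < ?k" using k by auto
    moreover from this have "0 < ns!0 - 1" "0 < ns!1 - 1" using n by fastforce+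
    ultimately have "u!0 \<noteq> v!0" "u!1 \<noteq> w!1" "v!0 \<noteq> w!0"
      using u_nth v_nth w_nth by simp_all
    then have "u \<noteq> v" "u \<noteq> w" "v \<noteq> w" by auto
    then show ?thesis by simp
  qed
  ultimately obtain T where T: "T \<subseteq> snd ?G" "is_tree T" "{u,v,w} \<subseteq> \<Union>T" "inj_on c T"
    using col unfolding three_rainbow_colouring_def by blast
  have "u \<in> \<Union>T" "v \<in> \<Union>T" "w \<in> \<Union>T" using T(3) by simp_all
  then have extremes: "\<forall>i<?k. \<exists>a\<in>\<Union>T. \<exists>b\<in>\<Union>T. a!i = 0 \<and> b!i = ns!i - 1"
    using u_nth v_nth w_nth by (metis (full_types))
  have "\<forall>x\<in>\<Union>T. \<forall>y\<in>\<Union>T. (adj_in T)\<^sup>*\<^sup>* x y" using T(2) unfolding is_tree_def by blast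
  from grid_layers_subset_layer_image[OF T(1) this extremes]
  have "grid_layers ns \<subseteq> layer ` T" .
  moreover have fin: "finite T" using T(2) by (simp add: is_tree_def)
  ultimately have "card (grid_layers ns) \<le> card (layer ` T)" by (intro card_mono) simp_all
  also have "\<dots> \<le> card T" using fin by (rule card_image_le)
  also have "\<dots> \<le> m" using col T(1) fin T(4) by (rule card_rainbow_le)
  finally show ?thesis .
qed

text \<open>The monotone grid path from \<open>s\<close> to \<open>t\<close> moves coordinate 0 to its target value first,
  then coordinate 1, and so on; \<open>staircase s t i j\<close> is its vertex where coordinate \<open>i\<close> is
  being moved and has reached the value \<open>j\<close>.\<close>
definition staircase :: "nat list \<Rightarrow> nat list \<Rightarrow> nat \<Rightarrow> nat \<Rightarrow> nat list" where
  "staircase s t i j = map (\<lambda>l. if l < i then t!l else if l = i then j else s!l) [0..<length s]"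

definition staircase_edges :: "nat list \<Rightarrow> nat list \<Rightarrow> nat list set set" where
  "staircase_edges s t = (\<lambda>(i,j). {staircase s t i j, staircase s t i (Suc j)}) `
     (SIGMA i:{..<length s}. {min (s!i) (t!i)..<max (s!i) (t!i)})"

lemma length_staircase [simp]: "length (staircase s t i j) = length s"
  by (simp add: staircase_def)

lemma nth_staircase:
  "l < length s \<Longrightarrow> staircase s t i j ! l = (if l < i then t!l else if l = i then j else s!l)"
  by (simp add: staircase_def)

lemma staircase_edgesE:
  assumes "e \<in> staircase_edges s t"
  obtains i j where "i < length s" "min (s!i) (t!i) \<le> j" "j < max (s!i) (t!i)"
    "e = {staircase s t i j, staircase s t i (Suc j)}"
  using assms unfolding staircase_edges_def by auto

lemma staircase_edgesI:
  "i < length s \<Longrightarrow> min (s!i) (t!i) \<le> j \<Longrightarrow> j < max (s!i) (t!i) \<Longrightarrow>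
    {staircase s t i j, staircase s t i (Suc j)} \<in> staircase_edges s t"
  unfolding staircase_edges_def by force

lemma finite_staircase_edges: "finite (staircase_edges s t)"
  by (simp add: staircase_edges_def)

lemma layer_staircase_edge:
  "i < length s \<Longrightarrow> layer {staircase s t i j, staircase s t i (Suc j)} = (i,j)"
  by (subst layer_doubleton[of i]) (auto simp: nth_staircase)

lemma staircase_edges_subset_grid_edges:
  assumes s: "grid_vertex ns s" and t: "grid_vertex ns t"
  shows "staircase_edges s t \<subseteq> snd (cart_prod (map path_graph ns))"
proof
  fix e assume "e \<in> staircase_edges s t"
  then obtain i j where ij: "i < length s" "j < max (s!i) (t!i)"
    "e = {staircase s t i j, staircase s t i (Suc j)}"
    by (rule staircase_edgesE)
  have len: "length s = length ns" using s by (simp add: grid_vertex_def)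
  have bound: "max (s!i) (t!i) < ns!i" using s t ij(1) len by (simp add: grid_vertex_def)
  have "grid_vertex ns (staircase s t i j')" if "j' \<le> max (s!i) (t!i)" for j'
    using s t that ij(1) len le_less_trans[OF that bound] by (auto simp: grid_vertex_def nth_staircase)
  then have "grid_adj ns (staircase s t i j) (staircase s t i (Suc j))"
    using ij(1,2) len unfolding grid_adj_def by (auto simp: nth_staircase)
  then show "e \<in> snd (cart_prod (map path_graph ns))"
    unfolding grid_edges_eq using ij(3) by blast
qed

lemma staircase_segment_walk:
  assumes i: "i < length s" and "min (s!i) (t!i) \<le> a" "a \<le> b" "b \<le> max (s!i) (t!i)"
  shows "(adj_in (staircase_edges s t))\<^sup>*\<^sup>* (staircase s t i a) (staircase s t i b)"
  using \<open>a \<le> b\<close> assms(4)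
proof (induction b rule: dec_induct)
  case (step j)
  have "adj_in (staircase_edges s t) (staircase s t i j) (staircase s t i (Suc j))"
    using staircase_edgesI[OF i, of t j] assms(2) step
    by (auto simp: adj_in_def nth_staircase i dest: arg_cong[where f = "\<lambda>x. x!i"])
  with step show ?case by (auto intro: rtranclp.rtrancl_into_rtrancl)
qed simp

lemma staircase_segment_connected:
  assumes "i < length s" "min (s!i) (t!i) \<le> a" "a \<le> max (s!i) (t!i)"
    "min (s!i) (t!i) \<le> b" "b \<le> max (s!i) (t!i)"
  shows "(adj_in (staircase_edges s t))\<^sup>*\<^sup>* (staircase s t i a) (staircase s t i b)"
proof (cases "a \<le> b")
  case True
  then show ?thesis using staircase_segment_walk assms by blast
next
  case False
  then have "(adj_in (staircase_edges s t))\<^sup>*\<^sup>* (staircase s t i b) (staircase s t i a)"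
    using staircase_segment_walk[of i s t b a] assms by simp
  then show ?thesis by (rule rtranclp_adj_in_sym)
qed

lemma staircase_reachable:
  assumes len: "length t = length s" and i: "i < length s"
    and "min (s!i) (t!i) \<le> j" "j \<le> max (s!i) (t!i)"
  shows "(adj_in (staircase_edges s t))\<^sup>*\<^sup>* s (staircase s t i j)"
  using assms(2-)
proof (induction i arbitrary: j)
  case 0
  have "staircase s t 0 (s!0) = s" by (rule nth_equalityI) (auto simp: nth_staircase)
  then show ?case
    using staircase_segment_connected[OF 0(1), of t "s!0" j] 0 by simp
next
  case (Suc i)
  \<comment> \<open>The start of segment \<open>i+1\<close> is the end of segment \<open>i\<close>.\<close>
  have "staircase s t (Suc i) (s ! Suc i) = staircase s t i (t!i)"
    by (rule nth_equalityI) (auto simp: nth_staircase)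
  moreover have "(adj_in (staircase_edges s t))\<^sup>*\<^sup>* s (staircase s t i (t!i))"
    using Suc.IH Suc.prems(1) by simp
  moreover have "(adj_in (staircase_edges s t))\<^sup>*\<^sup>*
      (staircase s t (Suc i) (s ! Suc i)) (staircase s t (Suc i) j)"
    using staircase_segment_connected[OF Suc.prems(1)] Suc.prems by simp
  ultimately show ?case by (metis rtranclp_trans)
qed

lemma staircase_edges_connected:
  assumes len: "length t = length s" and x: "x \<in> \<Union>(staircase_edges s t)"
  shows "(adj_in (staircase_edges s t))\<^sup>*\<^sup>* s x"
proof -
  obtain e where "e \<in> staircase_edges s t" "x \<in> e" using x by blast
  then obtain i j where "i < length s" "min (s!i) (t!i) \<le> j" "j < max (s!i) (t!i)"
    "x = staircase s t i j \<or> x = staircase s t i (Suc j)"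
    by (elim staircase_edgesE) auto
  then show ?thesis using staircase_reachable[OF len] by auto
qed

lemma staircase_edges_ends:
  assumes len: "length t = length s" and "s \<noteq> t"
  shows "s \<in> \<Union>(staircase_edges s t)" "t \<in> \<Union>(staircase_edges s t)"
proof -
  have "0 < length s" using assms by (cases s) auto
  then have "staircase s t (length s - 1) (t ! (length s - 1)) = t"
    using len by (intro nth_equalityI) (auto simp: nth_staircase)
  then have "(adj_in (staircase_edges s t))\<^sup>*\<^sup>* s t"
    using staircase_reachable[OF len, of "length s - 1" "t ! (length s - 1)"] \<open>0 < length s\<close>
    by simp
  from rtranclp_adj_in_endpoints[OF this \<open>s \<noteq> t\<close>]
  show "s \<in> \<Union>(staircase_edges s t)" "t \<in> \<Union>(staircase_edges s t)" by simp_all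
qed

lemma staircase_union_connected:
  assumes len: "\<forall>t\<in>S. length t = length m"
  defines "H \<equiv> \<Union>t\<in>S. staircase_edges m t"
  shows "\<forall>x\<in>\<Union>H. \<forall>y\<in>\<Union>H. (adj_in H)\<^sup>*\<^sup>* x y"
proof -
  have reach: "(adj_in H)\<^sup>*\<^sup>* m x" if "x \<in> \<Union>H" for x
  proof -
    from that obtain t where t: "t \<in> S" "x \<in> \<Union>(staircase_edges m t)"
      unfolding H_def by (elim UnionE UN_E) blast
    have "length t = length m" using len t(1) by blast
    have "staircase_edges m t \<subseteq> H" unfolding H_def using t(1) by (rule UN_upper)
    then show ?thesis
      by (rule rtranclp_adj_in_mono) (rule staircase_edges_connected[OF \<open>length t = length m\<close> t(2)])
  qed
  show ?thesis
  proof (intro ballI)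
    fix x y assume "x \<in> \<Union>H" "y \<in> \<Union>H"
    from rtranclp_adj_in_sym[OF reach[OF \<open>x \<in> \<Union>H\<close>]] reach[OF \<open>y \<in> \<Union>H\<close>]
    show "(adj_in H)\<^sup>*\<^sup>* x y" by (rule rtranclp_trans)
  qed
qed

lemma staircase_union_ends:
  assumes "length t = length m" "t \<in> S" "t \<noteq> m"
  shows "t \<in> \<Union>(\<Union>s\<in>S. staircase_edges m s)" "m \<in> \<Union>(\<Union>s\<in>S. staircase_edges m s)"
  using assms(2) staircase_edges_ends[OF assms(1) assms(3)[symmetric]] by blast+

definition median3 :: "nat \<Rightarrow> nat \<Rightarrow> nat \<Rightarrow> nat" where
  "median3 a b c = max (min a b) (min (max a b) c)"

definition median_vertex :: "nat list \<Rightarrow> nat list \<Rightarrow> nat list \<Rightarrow> nat list" where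
  "median_vertex u v w = map (\<lambda>i. median3 (u!i) (v!i) (w!i)) [0..<length u]"

lemma median3_between:
  "min a b \<le> median3 a b c \<and> median3 a b c \<le> max a b"
  "min a c \<le> median3 a b c \<and> median3 a b c \<le> max a c"
  "min b c \<le> median3 a b c \<and> median3 a b c \<le> max b c"
  by (auto simp: median3_def min_def max_def)

lemma median_vertex_between:
  assumes "t \<in> {u,v,w}" "t' \<in> {u,v,w}" "t \<noteq> t'" "i < length u"
  shows "min (t!i) (t'!i) \<le> median_vertex u v w ! i \<and> median_vertex u v w ! i \<le> max (t!i) (t'!i)"
proof -
  from assms(1-3) consider "t = u" "t' = v" | "t = v" "t' = u" | "t = u" "t' = w"
    | "t = w" "t' = u" | "t = v" "t' = w" | "t = w" "t' = v"
    by fastforce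
  then show ?thesis
    using median3_between[where a = "u!i" and b = "v!i" and c = "w!i"] assms(4)
    by cases (simp_all add: median_vertex_def min.commute max.commute)
qed

lemma grid_vertex_median_vertex:
  assumes "grid_vertex ns u" "grid_vertex ns v"
  shows "grid_vertex ns (median_vertex u v w)"
  unfolding grid_vertex_def
proof (intro conjI allI impI)
  show "length (median_vertex u v w) = length ns"
    using assms(1) by (simp add: grid_vertex_def median_vertex_def)
  fix i assume "i < length ns"
  then have "i < length u" using assms by (simp add: grid_vertex_def)
  then have "median_vertex u v w ! i = median3 (u!i) (v!i) (w!i)"
    by (simp add: median_vertex_def)
  also have "\<dots> \<le> max (u!i) (v!i)"
    using median3_between(1) by blast
  also have "\<dots> < ns!i" using assms \<open>i < length ns\<close> by (simp add: grid_vertex_def)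
  finally show "median_vertex u v w ! i < ns!i" .
qed

lemma between_intervals_disjoint:
  fixes m p q j :: nat
  assumes "min p q \<le> m" "m \<le> max p q"
    and "min m p \<le> j" "j < max m p" "min m q \<le> j" "j < max m q"
  shows False
  using assms by (cases "p \<le> q"; cases "m \<le> p"; cases "m \<le> q") (simp_all add: min_def max_def)

lemma inj_on_layer_staircases:
  assumes len: "length v = length u" "length w = length u"
  shows "inj_on layer (\<Union>t\<in>{u,v,w}. staircase_edges (median_vertex u v w) t)"
proof (rule inj_onI, elim UN_E)
  let ?m = "median_vertex u v w"
  have len_m: "length ?m = length u" by (simp add: median_vertex_def)
  fix e e' t t' assume eq: "layer e = layer e'" and t: "t \<in> {u,v,w}" "t' \<in> {u,v,w}"
    and "e \<in> staircase_edges ?m t" "e' \<in> staircase_edges ?m t'"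
  then obtain i j i' j' where
      e: "i < length ?m" "min (?m!i) (t!i) \<le> j" "j < max (?m!i) (t!i)"
        "e = {staircase ?m t i j, staircase ?m t i (Suc j)}"
    and e': "i' < length ?m" "min (?m!i') (t'!i') \<le> j'" "j' < max (?m!i') (t'!i')"
        "e' = {staircase ?m t' i' j', staircase ?m t' i' (Suc j')}"
    by (metis staircase_edgesE)
  have "(i,j) = (i',j')"
    using eq unfolding e(4) e'(4) layer_staircase_edge[OF e(1)] layer_staircase_edge[OF e'(1)] .
  then have ij: "i' = i" "j' = j" by simp_all
  show "e = e'"
  proof (cases "t = t'")
    case False
    have "min (t!i) (t'!i) \<le> ?m!i" "?m!i \<le> max (t!i) (t'!i)"
      using median_vertex_between[OF t False, of i] e(1) len_m by simp_all
    then have False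
      using between_intervals_disjoint[where m = "?m!i" and p = "t!i" and q = "t'!i" and j = j]
        e(2,3) e'(2,3) unfolding ij by blast
    then show ?thesis ..
  qed (simp add: e(4) e'(4) ij)
qed

lemma staircase_tree_exists:
  assumes u: "grid_vertex ns u" and v: "grid_vertex ns v" and w: "grid_vertex ns w"
    and distinct: "u \<noteq> v" "u \<noteq> w" "v \<noteq> w"
  shows "\<exists>T\<subseteq>snd (cart_prod (map path_graph ns)). is_tree T \<and> {u,v,w} \<subseteq> \<Union>T \<and> inj_on layer T"
proof -
  let ?m = "median_vertex u v w"
  define H where "H = (\<Union>t\<in>{u,v,w}. staircase_edges ?m t)"
  have m: "grid_vertex ns ?m" using u v by (rule grid_vertex_median_vertex)
  have len: "\<forall>t\<in>{u,v,w}. length t = length ?m"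
    using u v w m by (auto simp: grid_vertex_def)
  have H_grid: "H \<subseteq> snd (cart_prod (map path_graph ns))"
    unfolding H_def
  proof (rule UN_least)
    fix t assume "t \<in> {u,v,w}"
    then have "grid_vertex ns t" using u v w by (elim insertE) auto
    then show "staircase_edges ?m t \<subseteq> snd (cart_prod (map path_graph ns))"
      by (rule staircase_edges_subset_grid_edges[OF m])
  qed
  have ends: "t \<in> \<Union>H" "?m \<in> \<Union>H" if "t \<in> {u,v,w}" "t \<noteq> ?m" for t
    using staircase_union_ends[of t ?m "{u,v,w}"] len that unfolding H_def by simp_all
  have m_in: "?m \<in> \<Union>H"
  proof (cases "u = ?m")
    case True
    then show ?thesis using ends(2)[of v] distinct(1) by simp
  qed (use ends(2)[of u] in simp)
  have "t \<in> \<Union>H" if "t \<in> {u,v,w}" for t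
    using m_in ends(1)[OF that] by (cases "t = ?m") simp_all
  then have uvw: "{u,v,w} \<subseteq> \<Union>H" by (rule subsetI)
  have "\<forall>x\<in>\<Union>H. \<forall>y\<in>\<Union>H. (adj_in H)\<^sup>*\<^sup>* x y"
    unfolding H_def using len by (rule staircase_union_connected)
  moreover have "finite H" unfolding H_def by (simp add: finite_staircase_edges)
  moreover have "H \<noteq> {}" using m_in by auto
  moreover have "\<forall>e\<in>H. card e = 2" using H_grid card_grid_edge by blast
  ultimately obtain T where T: "T \<subseteq> H" "is_tree T" "\<Union>T = \<Union>H"
    using spanning_tree_exists[of H] by blast
  have "length v = length u" "length w = length u" using len by simp_all
  then have "inj_on layer H" unfolding H_def by (rule inj_on_layer_staircases)
  then have "inj_on layer T" using T(1) by (rule inj_on_subset)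
  show ?thesis
  proof (intro exI[of _ T] conjI)
    show "T \<subseteq> snd (cart_prod (map path_graph ns))" using T(1) H_grid by (rule order.trans)
    show "{u,v,w} \<subseteq> \<Union>T" using uvw unfolding T(3) .
  qed fact+
qed

lemma rx3_upper_bound:
  "\<exists>c. three_rainbow_colouring (cart_prod (map path_graph ns)) (card (grid_layers ns)) c"
proof -
  let ?G = "cart_prod (map path_graph ns)"
  have "finite (grid_layers ns)" by (simp add: grid_layers_def)
  then obtain f where f: "bij_betw f (grid_layers ns) {0..<card (grid_layers ns)}"
    using ex_bij_betw_finite_nat by blast
  have colours: "(f \<circ> layer) e < card (grid_layers ns)" if "e \<in> snd ?G" for e
    using bij_betw_apply[OF f layer_grid_edge[OF that]] by simp
  have trees: "\<exists>T\<subseteq>snd ?G. is_tree T \<and> S \<subseteq> \<Union>T \<and> inj_on (f \<circ> layer) T"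
    if "S \<subseteq> fst ?G" "card S = 3" for S
  proof -
    obtain u v w where S: "S = {u,v,w}" "u \<noteq> v" "u \<noteq> w" "v \<noteq> w"
      using \<open>card S = 3\<close> by (auto simp: card_3_iff)
    have "grid_vertex ns u" "grid_vertex ns v" "grid_vertex ns w"
      using that(1) unfolding S(1) grid_vertices_eq by auto
    from staircase_tree_exists[OF this S(2-4)] obtain T where
      T: "T \<subseteq> snd ?G" "is_tree T" "{u,v,w} \<subseteq> \<Union>T" "inj_on layer T"
      by (elim exE conjE)
    have "layer ` T \<subseteq> grid_layers ns" using T(1) layer_grid_edge by blast
    then have "inj_on (f \<circ> layer) T"
      by (rule comp_inj_on[OF T(4) inj_on_subset[OF bij_betw_imp_inj_on[OF f]]])
    with T(1,2,3) show ?thesis unfolding S(1) by (intro exI[of _ T]) simp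
  qed
  show ?thesis
    unfolding three_rainbow_colouring_def
  proof (intro exI[of _ "f \<circ> layer"] conjI allI ballI impI)
    show "(f \<circ> layer) e < card (grid_layers ns)" if "e \<in> snd ?G" for e
      using colours[OF that] .
    show "\<exists>T\<subseteq>snd ?G. is_tree T \<and> S \<subseteq> \<Union>T \<and> inj_on (f \<circ> layer) T"
      if "S \<subseteq> fst ?G" "card S = 3" for S
      using trees[OF that] .
  qed
qed

lemma sum_list_minus_one:
  fixes ns :: "nat list"
  assumes "\<forall>n\<in>set ns. 1 \<le> n"
  shows "(\<Sum>n\<leftarrow>ns. n - 1) = sum_list ns - length ns"
proof -
  have "(\<Sum>n\<leftarrow>ns. n - 1) + length ns = sum_list ns" using assms by (induction ns) auto
  then show ?thesis by simp
qed

theorem corollary1: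
  fixes ns :: "nat list"
  assumes "length ns \<ge> 2"
    and "\<forall>i<length ns. ns ! i \<ge> 3"
  shows "rx3 (cart_prod (map path_graph ns)) = sum_list ns - length ns"
proof -
  have "rx3 (cart_prod (map path_graph ns)) = card (grid_layers ns)"
    unfolding rx3_def
  proof (rule Least_equality)
    show "\<exists>c. three_rainbow_colouring (cart_prod (map path_graph ns)) (card (grid_layers ns)) c"
      by (rule rx3_upper_bound)
    have "\<forall>i<length ns. 2 \<le> ns!i" using assms(2) by (simp add: numeral_eq_Suc Suc_leD)
    moreover fix m assume "\<exists>c. three_rainbow_colouring (cart_prod (map path_graph ns)) m c"
    ultimately show "card (grid_layers ns) \<le> m"
      using rx3_lower_bound[OF assms(1)] by blast
  qed
  also have "\<dots> = sum_list ns - length ns"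
    unfolding card_grid_layers using assms(2)
    by (intro sum_list_minus_one) (fastforce simp: in_set_conv_nth)
  finally show ?thesis .
qed

end
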